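(* For every operator $\mathtt P\in\partial_z+z^{-1}\mathcal D_-$, the equation $\mathtt P\cdot\Psi=0$ has, up to multiplication by a constant, exactly one nonzero solution $\Psi\in H$, and this solution can be normalized so that $\Psi\in1+H_-$. In particular, for $\mathcal W\in{\rm Gr}^{(0)}_+$ the equation $\mathtt P_{\mathcal W}\cdot\Psi=0$ has a unique solution in $1+H_-$, namely the wave function of $\mathcal W$ (the unique element of $\mathcal W\cap(1+H_-)$).
   Context: $H_+=\mathbb C[z]$, $H_-=z^{-1}\mathbb C[[z^{-1}]]$, $H=H_+\oplus H_-$. ${\rm Gr}^{(0)}_+$ is the set of closed subspaces $\mathcal W\subset H$ with $\pi_+:\mathcal W\to H_+$ (projection along $H_-$) an isomorphism. $\mathcal D=\mathbb C((z^{-1}))[[\partial_z]]$ is the ring of differential operators $\sum_{m\ge0}a_m(z)\partial_z^m$, $a_m\in H$, acting on $H$; $\mathcal D_\pm=H_\pm[[\partial_z]]$. For $\mathcal W\in{\rm Gr}^{(0)}_+$ let $\mathtt G_{\mathcal W}$ be the unique element of $\{\mathtt G\in\mathcal D:\mathtt G-1\in\mathcal D_-\}$ with $\mathcal W=\mathtt G_{\mathcal W}\cdot H_+$ (Sato's theorem), and $\mathtt P_{\mathcal W}:=\mathtt G_{\mathcal W}\partial_z\mathtt G_{\mathcal W}^{-1}$. *)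

theory Defs
  imports "HOL-Analysis.Analysis"
begin

text \<open>Elements of H = C[z] + z^-1 C[[z^-1]] are represented by their coefficient
  functions c :: int => complex, where c n is the coefficient of z^n.\<close>

type_synonym laurent = "int \<Rightarrow> complex"

definition Hsp :: "laurent set" where
  "Hsp = {f. \<exists>N::int. \<forall>n>N. f n = 0}"

definition Hplus :: "laurent set" where
  "Hplus = {f. f \<in> Hsp \<and> (\<forall>n<0. f n = 0)}"

definition Hminus :: "laurent set" where
  "Hminus = {f. \<forall>n\<ge>0. f n = 0}"

definition onePlusHm :: "laurent set" where
  "onePlusHm = {f. f 0 = 1 \<and> (\<forall>n>0. f n = 0)}"

definition pplus :: "laurent \<Rightarrow> laurent" where
  "pplus f = (\<lambda>n. if n \<ge> 0 then f n else 0)"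

text \<open>Falling factorial n(n-1)...(n-m+1) for integer n: d^m z^n = ffact_int n m * z^(n-m).\<close>
definition ffact_int :: "int \<Rightarrow> nat \<Rightarrow> complex" where
  "ffact_int n m = (\<Prod>t<m. of_int (n - int t))"

text \<open>A differential operator sum_m a_m(z) d_z^m is represented by a :: nat => laurent,
  a m being the coefficient function of a_m.\<close>
type_synonym dop = "nat \<Rightarrow> laurent"

definition Dsp :: "dop set" where
  "Dsp = {a. \<forall>m. a m \<in> Hsp}"

definition Dminus :: "dop set" where
  "Dminus = {a. \<forall>m. a m \<in> Hminus}"

definition one_op :: dop where
  "one_op = (\<lambda>m i. if m = 0 \<and> i = 0 then 1 else 0)"

definition dz_op :: dop where
  "dz_op = (\<lambda>m i. if m = 1 \<and> i = 0 then 1 else 0)"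

text \<open>The class d_z + z^-1 D_- : the coefficient of d^m minus delta_{m,1} lies in z^-1 H_-.\<close>
definition Pclass :: "dop set" where
  "Pclass = {a. \<forall>m i. i > -2 \<longrightarrow> a m i = dz_op m i}"

text \<open>Action of an operator on H (coefficientwise; the sums are finite in all cases used).\<close>
definition act :: "dop \<Rightarrow> laurent \<Rightarrow> laurent" where
  "act a f = (\<lambda>j. infsum (\<lambda>(m::nat, i::int). a m i * ffact_int (j - i + int m) m * f (j - i + int m)) UNIV)"

text \<open>Composition of operators: (a_m d^m)(b_n d^n) = sum_k (m choose k) a_m (d^k b_n) d^(m-k+n).\<close>
definition comp_op :: "dop \<Rightarrow> dop \<Rightarrow> dop" where
  "comp_op a b = (\<lambda>r j. infsum (\<lambda>(m::nat, k::nat, i::int).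
      of_nat (m choose k) * a m i * ffact_int (j - i + int k) k * b (r + k - m) (j - i + int k))
      {(m, k, i). k \<le> m \<and> m \<le> r + k})"

definition minus_op :: "dop \<Rightarrow> dop \<Rightarrow> dop" where
  "minus_op a b = (\<lambda>m i. a m i - b m i)"

text \<open>Closedness in the z^-1-adic topology of H.\<close>
definition adic_closed :: "laurent set \<Rightarrow> bool" where
  "adic_closed W \<longleftrightarrow> (\<forall>f\<in>Hsp. (\<forall>N::nat. \<exists>w\<in>W. \<forall>n. n > - int N \<longrightarrow> f n = w n) \<longrightarrow> f \<in> W)"

definition csubspace_H :: "laurent set \<Rightarrow> bool" where
  "csubspace_H W \<longleftrightarrow> W \<subseteq> Hsp \<and> (\<lambda>n. 0) \<in> W \<and>
     (\<forall>f\<in>W. \<forall>g\<in>W. (\<lambda>n. f n + g n) \<in> W) \<and> (\<forall>c. \<forall>f\<in>W. (\<lambda>n. c * f n) \<in> W)"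

definition Gr0 :: "laurent set set" where
  "Gr0 = {W. csubspace_H W \<and> adic_closed W \<and> bij_betw pplus W Hplus}"

definition satoG :: "laurent set \<Rightarrow> dop" where
  "satoG W = (THE G. G \<in> Dsp \<and> minus_op G one_op \<in> Dminus \<and> W = act G ` Hplus)"

definition inv_op :: "dop \<Rightarrow> dop" where
  "inv_op G = (THE K. minus_op K one_op \<in> Dminus \<and> comp_op G K = one_op \<and> comp_op K G = one_op)"

definition P_W :: "laurent set \<Rightarrow> dop" where
  "P_W W = comp_op (comp_op (satoG W) dz_op) (inv_op (satoG W))"

definition wave :: "laurent set \<Rightarrow> laurent" where
  "wave W = (THE psi. psi \<in> W \<and> psi \<in> onePlusHm)"

end

theory Submission
  imports Defs
begin

text \<open>An operator \<open>P \<in> \<partial> + z\<^sup>-\<^sup>1 D\<^sub>-\<close> acts on the coefficients by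
  \<open>(P \<Psi>)\<^sub>j\<^sub>-\<^sub>1 = j \<Psi>\<^sub>j + (terms in \<Psi>\<^sub>l, l > j)\<close>.
  Hence a solution of \<open>P \<Psi> = 0\<close> of bounded degree has no coefficients in positive degree,
  is determined by \<open>\<Psi>\<^sub>0\<close> through a downward recursion, and that recursion can be run with
  \<open>\<Psi>\<^sub>0 = 1\<close>.
  For \<open>W \<in> Gr0\<close>, Sato's operator \<open>G\<close> is built row by row from the sections of
  \<open>\<pi>\<^sub>+ : W \<rightarrow> H\<^sub>+\<close>, and so is its inverse \<open>K \<in> 1 + D\<^sub>-\<close>. Since the action is
  compatible with composition (the Vandermonde identity for falling factorials),
  \<open>P\<^sub>W \<Psi> = 0\<close> means \<open>\<partial>(K \<Psi>) = 0\<close>, i.e. \<open>K \<Psi>\<close> is a constant and \<open>\<Psi>\<close> a multiple of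
  \<open>G\<cdot>1\<close>, which is the wave function.\<close>

lemma summable_on_finite_support:
  fixes f :: "'a \<Rightarrow> complex"
  assumes "finite F" "\<And>x. x \<in> A \<Longrightarrow> x \<notin> F \<Longrightarrow> f x = 0"
  shows "f summable_on A"
proof -
  have "f summable_on (A \<inter> F)" using assms(1) by simp
  moreover have "f summable_on (A \<inter> F) \<longleftrightarrow> f summable_on A"
    by (rule summable_on_cong_neutral) (use assms in auto)
  ultimately show ?thesis by simp
qed

lemma infsum_finite_support:
  fixes f :: "'a \<Rightarrow> complex"
  assumes "finite F" "\<And>x. x \<in> A \<Longrightarrow> x \<notin> F \<Longrightarrow> f x = 0"
  shows "infsum f A = sum f (A \<inter> F)"
proof -
  have "infsum f A = infsum f (A \<inter> F)"
    by (rule infsum_cong_neutral) (use assms in auto)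
  also have "\<dots> = sum f (A \<inter> F)" using assms(1) by simp
  finally show ?thesis .
qed

lemma infsum_Sigma_finite_support:
  fixes g :: "'a \<times> 'b \<Rightarrow> complex"
  assumes "finite F" "\<And>x. x \<in> Sigma A B \<Longrightarrow> x \<notin> F \<Longrightarrow> g x = 0"
  shows "infsum (\<lambda>x. infsum (\<lambda>y. g (x, y)) (B x)) A = infsum g (Sigma A B)"
proof -
  have "g summable_on Sigma A B" by (rule summable_on_finite_support[OF assms])
  moreover have "(\<lambda>(x, y). g (x, y)) = g" by auto
  ultimately show ?thesis using infsum_Sigma'_banach[of "\<lambda>x y. g (x, y)" A B] by simp
qed

section \<open>Falling factorials\<close>

lemma ffact_int_0 [simp]: "ffact_int n 0 = 1"
  by (simp add: ffact_int_def)

lemma ffact_int_Suc: "ffact_int n (Suc m) = ffact_int n m * of_int (n - int m)"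
  by (simp add: ffact_int_def)

lemma ffact_int_eq_0:
  assumes "0 \<le> n" "n < int m"
  shows "ffact_int n m = 0"
proof -
  have "nat n \<in> {..<m}" using assms by auto
  moreover have "of_int (n - int (nat n)) = (0::complex)" using assms by simp
  ultimately show ?thesis unfolding ffact_int_def by (metis prod_zero_iff finite_lessThan)
qed

lemma ffact_int_add: "ffact_int p (n + t) = ffact_int p n * ffact_int (p - int n) t"
  by (induction t) (simp_all add: ffact_int_Suc algebra_simps)

lemma ffact_int_gchoose: "ffact_int x m = (of_int x gchoose m) * fact m"
  unfolding ffact_int_def gbinomial_mult_fact' by (simp add: atLeast0LessThan)

lemma ffact_int_self: "ffact_int (int n) n = fact n"
  by (simp add: ffact_int_gchoose binomial_gbinomial[symmetric])

lemma ffact_int_Vandermonde: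
  "ffact_int (x + y) m = (\<Sum>k\<le>m. of_nat (m choose k) * ffact_int x k * ffact_int y (m - k))"
proof -
  have "ffact_int (x + y) m = (\<Sum>k=0..m. (of_int x gchoose k) * (of_int y gchoose (m - k))) * fact m"
    by (simp add: ffact_int_gchoose gbinomial_Vandermonde)
  also have "\<dots> = (\<Sum>k\<le>m. of_nat (m choose k) * ffact_int x k * ffact_int y (m - k))"
    unfolding sum_distrib_right atMost_atLeast0
  proof (rule sum.cong[OF refl])
    fix k assume "k \<in> {0..m}"
    then have "fact k * fact (m - k) * (m choose k) = (fact m :: nat)"
      by (simp add: binomial_fact_lemma)
    then have e: "(fact k * fact (m - k) * of_nat (m choose k) :: complex) = fact m"
      by (metis of_nat_fact of_nat_mult)
    show "(of_int x gchoose k) * (of_int y gchoose (m - k)) * fact m =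
          of_nat (m choose k) * ffact_int x k * ffact_int y (m - k)"
      unfolding ffact_int_gchoose e[symmetric] by (simp add: algebra_simps)
  qed
  finally show ?thesis .
qed

section \<open>Degree bounds and the action of operators\<close>

definition deg_le :: "int \<Rightarrow> laurent \<Rightarrow> bool" where
  "deg_le N f \<longleftrightarrow> (\<forall>n>N. f n = 0)"

definition zpow :: "nat \<Rightarrow> laurent" where
  "zpow n = (\<lambda>l. if l = int n then 1 else 0)"

text \<open>Operators with coefficients in \<open>\<complex>[[z\<^sup>-\<^sup>1]]\<close>; on them every coefficient of the
  action is a finite sum.\<close>
definition Dnonpos :: "dop set" where
  "Dnonpos = {a. \<forall>m i. 0 < i \<longrightarrow> a m i = 0}"

lemma DnonposD: "a \<in> Dnonpos \<Longrightarrow> a m i \<noteq> 0 \<Longrightarrow> i \<le> 0"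
  unfolding Dnonpos_def by force

lemma one_op_Dnonpos: "one_op \<in> Dnonpos"
  unfolding Dnonpos_def one_op_def by auto

lemma dz_op_Dnonpos: "dz_op \<in> Dnonpos"
  unfolding Dnonpos_def dz_op_def by auto

lemma deg_leD: "deg_le N f \<Longrightarrow> f n \<noteq> 0 \<Longrightarrow> n \<le> N"
  unfolding deg_le_def by force

lemma Hsp_iff_deg_le: "f \<in> Hsp \<longleftrightarrow> (\<exists>N. deg_le N f)"
  unfolding Hsp_def deg_le_def by auto

lemma deg_le_zpow: "deg_le (int n) (zpow n)"
  unfolding deg_le_def zpow_def by auto

lemma onePlusHm_deg_le: "f \<in> onePlusHm \<Longrightarrow> deg_le 0 f"
  unfolding onePlusHm_def deg_le_def by auto

lemma deg_le_vanishes: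
  assumes "deg_le N f" and step: "\<And>j. (\<And>l. j < l \<Longrightarrow> f l = 0) \<Longrightarrow> f j = 0"
  shows "f = (\<lambda>_. 0)"
proof -
  have above: "\<forall>l. N - int k < l \<longrightarrow> f l = 0" for k
  proof (induction k)
    case 0
    then show ?case using assms(1) unfolding deg_le_def by simp
  next
    case (Suc k)
    have top: "f (N - int k) = 0" by (rule step) (use Suc in auto)
    show ?case
    proof (intro allI impI)
      fix l assume "N - int (Suc k) < l"
      then have "l = N - int k \<or> N - int k < l" by linarith
      then show "f l = 0" using Suc.IH top by auto
    qed
  qed
  show ?thesis
  proof
    fix n show "f n = 0" using above[of "nat (N - n) + 1"] by simp
  qed
qed

lemma act_support:
  assumes a: "a \<in> Dnonpos" and f: "deg_le N f"
    and nz: "a m i * ffact_int (j - i + int m) m * f (j - i + int m) \<noteq> 0"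
  shows "(m, i) \<in> {..nat (N - j)} \<times> {- int (nat (N - j))..0}"
proof -
  from nz have "a m i \<noteq> 0" "f (j - i + int m) \<noteq> 0" by auto
  then have "i \<le> 0" "j - i + int m \<le> N" using DnonposD[OF a] deg_leD[OF f] by auto
  then show ?thesis by auto
qed

lemma act_summable:
  assumes "a \<in> Dnonpos" "deg_le N f"
  shows "(\<lambda>(m::nat, i::int). a m i * ffact_int (j - i + int m) m * f (j - i + int m)) summable_on UNIV"
  by (rule summable_on_finite_support[where F="{..nat (N - j)} \<times> {- int (nat (N - j))..0}"])
     (use act_support[OF assms] in auto)

lemma act_deg_le:
  assumes a: "a \<in> Dnonpos" and f: "deg_le N f"
  shows "deg_le N (act a f)"
  unfolding deg_le_def
proof (intro allI impI)
  fix j assume j: "N < j"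
  have "(\<lambda>(m::nat, i::int). a m i * ffact_int (j - i + int m) m * f (j - i + int m)) = (\<lambda>_. 0)"
    using DnonposD[OF a] deg_leD[OF f] j by (force simp: fun_eq_iff)
  then show "act a f j = 0" unfolding act_def by simp
qed

lemma act_Hsp: "a \<in> Dnonpos \<Longrightarrow> f \<in> Hsp \<Longrightarrow> act a f \<in> Hsp"
  using Hsp_iff_deg_le act_deg_le by blast

lemma act_scale: "act a (\<lambda>n. c * f n) = (\<lambda>j. c * act a f j)"
proof
  fix j
  have "act a (\<lambda>n. c * f n) j = infsum (\<lambda>x. c * (\<lambda>(m::nat, i::int).
      a m i * ffact_int (j - i + int m) m * f (j - i + int m)) x) UNIV"
    unfolding act_def by (rule infsum_cong) (auto simp: algebra_simps)
  also have "\<dots> = c * act a f j" unfolding act_def by (rule infsum_cmult_right')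
  finally show "act a (\<lambda>n. c * f n) j = c * act a f j" .
qed

lemma act_zero: "act a (\<lambda>_. 0) = (\<lambda>_. 0)"
  using act_scale[of a 0 "\<lambda>_. 0"] by simp

lemma act_lincomb:
  assumes a: "a \<in> Dnonpos" and "f \<in> Hsp" "g \<in> Hsp"
  shows "act a (\<lambda>n. f n + c * g n) = (\<lambda>j. act a f j + c * act a g j)"
proof
  fix j
  obtain N1 N2 where "deg_le N1 f" "deg_le N2 g" using assms(2,3) Hsp_iff_deg_le by blast
  then have f: "deg_le (max N1 N2) f" and g: "deg_le (max N1 N2) (\<lambda>n. c * g n)"
    by (auto simp: deg_le_def)
  have "act a (\<lambda>n. f n + c * g n) j = infsum (\<lambda>x.
        (\<lambda>(m::nat, i::int). a m i * ffact_int (j - i + int m) m * f (j - i + int m)) x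
      + (\<lambda>(m::nat, i::int). a m i * ffact_int (j - i + int m) m * (c * g (j - i + int m))) x) UNIV"
    unfolding act_def by (rule infsum_cong) (auto simp: algebra_simps)
  also have "\<dots> = act a f j + act a (\<lambda>n. c * g n) j"
    unfolding act_def by (rule infsum_add[OF act_summable[OF a f] act_summable[OF a g]])
  finally show "act a (\<lambda>n. f n + c * g n) j = act a f j + c * act a g j"
    by (simp add: act_scale)
qed

lemma zero_Hsp: "(\<lambda>_. 0) \<in> Hsp"
  unfolding Hsp_def by auto

lemma Hsp_lincomb:
  assumes "f \<in> Hsp" "g \<in> Hsp"
  shows "(\<lambda>n. f n + c * g n) \<in> Hsp"
proof -
  obtain N1 N2 where "deg_le N1 f" "deg_le N2 g" using assms Hsp_iff_deg_le by blast
  then have "deg_le (max N1 N2) (\<lambda>n. f n + c * g n)" by (auto simp: deg_le_def)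
  then show ?thesis using Hsp_iff_deg_le by blast
qed

lemma act_zpow:
  "act a (zpow n) j = (\<Sum>m\<le>n. a m (j - int n + int m) * ffact_int (int n) m)"
proof -
  let ?g = "\<lambda>(m::nat, i::int). a m i * ffact_int (j - i + int m) m * zpow n (j - i + int m)"
  let ?h = "\<lambda>m::nat. (m, j - int n + int m)"
  have "act a (zpow n) j = sum ?g (UNIV \<inter> ?h ` {..n})"
    unfolding act_def
  proof (rule infsum_finite_support)
    fix x assume "x \<notin> ?h ` {..n}"
    moreover obtain m i where x: "x = (m, i)" by fastforce
    moreover have "m \<le> n" if "?g x \<noteq> 0"
      using that x ffact_int_eq_0[of "int n" m] by (force simp: zpow_def split: if_splits)
    ultimately show "?g x = 0" by (force simp: zpow_def)
  qed auto
  also have "\<dots> = sum (?g \<circ> ?h) {..n}"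
    by (simp add: sum.reindex inj_on_def)
  also have "\<dots> = (\<Sum>m\<le>n. a m (j - int n + int m) * ffact_int (int n) m)"
    by (rule sum.cong) (auto simp: zpow_def)
  finally show ?thesis .
qed

lemma act_zpow_eq: "act a (zpow n) j =
    (\<Sum>m<n. a m (j - int n + int m) * ffact_int (int n) m) + a n j * fact n"
proof -
  have "{..n} = insert n {..<n}" by auto
  then show ?thesis unfolding act_zpow by (simp add: ffact_int_self)
qed

text \<open>An operator is determined by its action on the monomials \<open>z\<^sup>n\<close>: the row \<open>a\<^sub>n\<close>
  appears in \<open>a\<cdot>z\<^sup>n\<close> with factor \<open>n!\<close>, besides the rows \<open>a\<^sub>m\<close>, \<open>m < n\<close>.\<close>
lemma dop_eq_if_act_zpow_eq:
  assumes "\<And>n. act a (zpow n) = act b (zpow n)"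
  shows "a = b"
proof -
  have "a m = b m" for m
  proof (induction m rule: less_induct)
    case (less m)
    show ?case
    proof
      fix j
      have "(\<Sum>m'<m. a m' (j - int m + int m') * ffact_int (int m) m') =
            (\<Sum>m'<m. b m' (j - int m + int m') * ffact_int (int m) m')"
        using less by (intro sum.cong) auto
      then have "a m j * fact m = b m j * fact m"
        using assms[of m] act_zpow_eq[of a m j] act_zpow_eq[of b m j] by simp
      then show "a m j = b m j" by simp
    qed
  qed
  then show ?thesis by auto
qed

lemma act_one_op: "act one_op f = f"
proof
  fix j
  let ?g = "\<lambda>(m::nat, i::int). one_op m i * ffact_int (j - i + int m) m * f (j - i + int m)"
  have "act one_op f j = sum ?g (UNIV \<inter> {(0, 0)})"
    unfolding act_def by (rule infsum_finite_support) (auto simp: one_op_def split: if_splits)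
  then show "act one_op f j = f j" by (simp add: one_op_def)
qed

lemma act_dz_op: "act dz_op f j = of_int (j + 1) * f (j + 1)"
proof -
  let ?g = "\<lambda>(m::nat, i::int). dz_op m i * ffact_int (j - i + int m) m * f (j - i + int m)"
  have "act dz_op f j = sum ?g (UNIV \<inter> {(1, 0)})"
    unfolding act_def by (rule infsum_finite_support) (auto simp: dz_op_def split: if_splits)
  then show ?thesis by (simp add: dz_op_def ffact_int_Suc)
qed

lemma act_dz_op_eq_0_iff: "act dz_op u = (\<lambda>_. 0) \<longleftrightarrow> u = (\<lambda>l. u 0 * zpow 0 l)"
proof
  assume z: "act dz_op u = (\<lambda>_. 0)"
  have "u l = 0" if "l \<noteq> 0" for l
    using fun_cong[OF z, of "l - 1"] that unfolding act_dz_op by simp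
  then show "u = (\<lambda>l. u 0 * zpow 0 l)" by (auto simp: zpow_def)
next
  assume e: "u = (\<lambda>l. u 0 * zpow 0 l)"
  have "of_int (j + 1) * u (j + 1) = 0" for j
    using fun_cong[OF e, of "j + 1"] by (cases "j + 1 = 0") (auto simp: zpow_def)
  then show "act dz_op u = (\<lambda>_. 0)" unfolding act_dz_op by (simp add: fun_eq_iff)
qed

section \<open>Composition of operators\<close>

definition comp_index :: "nat \<Rightarrow> (nat \<times> nat \<times> int) set" where
  "comp_index r = {(m, k, i). k \<le> m \<and> m \<le> r + k}"

lemma comp_op_eq: "comp_op a b r q = infsum (\<lambda>(m::nat, k::nat, i::int).
      of_nat (m choose k) * a m i * ffact_int (q - i + int k) k * b (r + k - m) (q - i + int k))
      (comp_index r)"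
  unfolding comp_op_def comp_index_def by simp

lemma comp_op_summable:
  assumes a: "a \<in> Dnonpos" and b: "b \<in> Dnonpos"
  shows "(\<lambda>(m::nat, k::nat, i::int). of_nat (m choose k) * a m i * ffact_int (q - i + int k) k
      * b (r + k - m) (q - i + int k)) summable_on (comp_index r)"
proof (rule summable_on_finite_support[where F="{..r + nat (-q)} \<times> {..nat (-q)} \<times> {q..0}"])
  fix x assume x: "x \<in> comp_index r" "x \<notin> {..r + nat (-q)} \<times> {..nat (-q)} \<times> {q..0}"
  obtain m k i where e: "x = (m, k, i)" by (metis prod.collapse)
  have "a m i = 0 \<or> b (r + k - m) (q - i + int k) = 0"
  proof (rule ccontr)
    assume "\<not> ?thesis"
    then have "i \<le> 0" "q - i + int k \<le> 0" using DnonposD[OF a] DnonposD[OF b] by auto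
    with x e show False by (auto simp: comp_index_def)
  qed
  then show "(\<lambda>(m::nat, k::nat, i::int). of_nat (m choose k) * a m i * ffact_int (q - i + int k) k
      * b (r + k - m) (q - i + int k)) x = 0" using e by auto
qed auto

lemma comp_op_Dnonpos:
  assumes a: "a \<in> Dnonpos" and b: "b \<in> Dnonpos"
  shows "comp_op a b \<in> Dnonpos"
  unfolding Dnonpos_def mem_Collect_eq
proof (intro allI impI)
  fix r and q :: int assume q: "0 < q"
  have "(\<lambda>(m::nat, k::nat, i::int). of_nat (m choose k) * a m i * ffact_int (q - i + int k) k
      * b (r + k - m) (q - i + int k)) = (\<lambda>_. 0)"
    using DnonposD[OF a] DnonposD[OF b] q by (force simp: fun_eq_iff)
  then show "comp_op a b r q = 0" unfolding comp_op_eq by simp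
qed

lemma comp_op_add_left:
  assumes a: "a \<in> Dnonpos" and a': "a' \<in> Dnonpos" and b: "b \<in> Dnonpos"
  shows "comp_op (\<lambda>m i. a m i + a' m i) b = (\<lambda>r q. comp_op a b r q + comp_op a' b r q)"
proof (intro ext)
  fix r q
  have "comp_op (\<lambda>m i. a m i + a' m i) b r q = infsum (\<lambda>x.
      (\<lambda>(m::nat, k::nat, i::int). of_nat (m choose k) * a m i * ffact_int (q - i + int k) k
         * b (r + k - m) (q - i + int k)) x +
      (\<lambda>(m::nat, k::nat, i::int). of_nat (m choose k) * a' m i * ffact_int (q - i + int k) k
         * b (r + k - m) (q - i + int k)) x) (comp_index r)"
    unfolding comp_op_eq by (rule infsum_cong) (auto simp: algebra_simps)
  also have "\<dots> = comp_op a b r q + comp_op a' b r q"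
    unfolding comp_op_eq by (rule infsum_add[OF comp_op_summable[OF a b] comp_op_summable[OF a' b]])
  finally show "comp_op (\<lambda>m i. a m i + a' m i) b r q = comp_op a b r q + comp_op a' b r q" .
qed

lemma comp_op_one_left: "comp_op one_op b = b"
proof (intro ext)
  fix r q
  let ?g = "\<lambda>(m::nat, k::nat, i::int). of_nat (m choose k) * one_op m i
    * ffact_int (q - i + int k) k * b (r + k - m) (q - i + int k)"
  have "comp_op one_op b r q = sum ?g (comp_index r \<inter> {(0, 0, 0)})"
    unfolding comp_op_eq
    by (rule infsum_finite_support) (auto simp: one_op_def comp_index_def split: if_splits)
  also have "comp_index r \<inter> {(0, 0, 0)} = {(0, 0, 0)}" by (auto simp: comp_index_def)
  finally show "comp_op one_op b r q = b r q" by (simp add: one_op_def)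
qed

text \<open>The terms of \<open>(a\<circ>b)\<cdot>f\<close> at \<open>z\<^sup>j\<close>, indexed by the row and degree \<open>(r, q)\<close> of
  \<open>a\<circ>b\<close> and the index \<open>(m, k, i)\<close> of the sum defining its coefficient.\<close>
definition comp_terms :: "dop \<Rightarrow> dop \<Rightarrow> laurent \<Rightarrow> int \<Rightarrow> (nat \<times> int) \<times> (nat \<times> nat \<times> int) \<Rightarrow> complex"
  where "comp_terms a b f j = (\<lambda>((r, q), (m, k, i)).
     of_nat (m choose k) * a m i * ffact_int (q - i + int k) k * b (r + k - m) (q - i + int k)
       * (ffact_int (j - q + int r) r * f (j - q + int r)))"

text \<open>The terms of \<open>a\<cdot>(b\<cdot>f)\<close> at \<open>z\<^sup>j\<close>, indexed by \<open>(m, i)\<close> for \<open>a\<close>, \<open>(n, i')\<close> for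
  \<open>b\<close>, and \<open>k\<close>, the Vandermonde splitting of the falling factorial coming from \<open>a\<close>.\<close>
definition iter_terms :: "dop \<Rightarrow> dop \<Rightarrow> laurent \<Rightarrow> int \<Rightarrow> ((nat \<times> int) \<times> (nat \<times> int)) \<times> nat \<Rightarrow> complex"
  where "iter_terms a b f j = (\<lambda>(((m, i), (n, i')), k). a m i *
     (of_nat (m choose k) * ffact_int i' k * ffact_int (j - i + int m - i') (m - k)) *
     (b n i' * ffact_int (j - i + int m - i' + int n) n * f (j - i + int m - i' + int n)))"

lemma act_comp_op_eq_infsum:
  assumes a: "a \<in> Dnonpos" and b: "b \<in> Dnonpos" and f: "deg_le N f"
  shows "act (comp_op a b) f j = infsum (comp_terms a b f j) (SIGMA x:UNIV. comp_index (fst x))"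
proof -
  define D where "D = nat (N - j)"
  have "act (comp_op a b) f j
      = infsum (\<lambda>x. infsum (\<lambda>y. comp_terms a b f j (x, y)) (comp_index (fst x))) UNIV"
    unfolding act_def
  proof (rule infsum_cong)
    fix x :: "nat \<times> int"
    obtain r q where x: "x = (r, q)" by fastforce
    have "comp_op a b r q * ffact_int (j - q + int r) r * f (j - q + int r)
       = infsum (\<lambda>(m::nat, k::nat, i::int). of_nat (m choose k) * a m i
           * ffact_int (q - i + int k) k * b (r + k - m) (q - i + int k)) (comp_index r)
         * (ffact_int (j - q + int r) r * f (j - q + int r))"
      unfolding comp_op_eq by (simp add: mult.assoc)
    also have "\<dots> = infsum (\<lambda>y. comp_terms a b f j (x, y)) (comp_index (fst x))"
      unfolding infsum_cmult_left'[symmetric] x fst_conv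
      by (rule infsum_cong) (auto simp: comp_terms_def)
    finally show "(\<lambda>(m, i). comp_op a b m i * ffact_int (j - i + int m) m * f (j - i + int m)) x =
      infsum (\<lambda>y. comp_terms a b f j (x, y)) (comp_index (fst x))" using x by simp
  qed
  also have "\<dots> = infsum (comp_terms a b f j) (SIGMA x:UNIV. comp_index (fst x))"
  proof (rule infsum_Sigma_finite_support
      [where F="({..D} \<times> {-int D..0}) \<times> ({..D} \<times> {..D} \<times> {-int D..0})"])
    fix x assume x: "x \<in> (SIGMA x:UNIV. comp_index (fst x))"
      "x \<notin> ({..D} \<times> {-int D..0}) \<times> ({..D} \<times> {..D} \<times> {-int D..0})"
    obtain r q m k i where e: "x = ((r, q), (m, k, i))" by (metis prod.collapse)
    show "comp_terms a b f j x = 0"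
    proof (rule ccontr)
      assume "comp_terms a b f j x \<noteq> 0"
      then have "a m i \<noteq> 0" "b (r + k - m) (q - i + int k) \<noteq> 0" "f (j - q + int r) \<noteq> 0"
        using e by (auto simp: comp_terms_def)
      then have "i \<le> 0" "q - i + int k \<le> 0" "j - q + int r \<le> N"
        using DnonposD[OF a] DnonposD[OF b] deg_leD[OF f] by auto
      moreover have "k \<le> m" "m \<le> r + k" using x(1) e by (auto simp: comp_index_def)
      ultimately show False using x(2) e unfolding D_def by auto
    qed
  qed auto
  finally show ?thesis .
qed

lemma act_act_support:
  assumes "a \<in> Dnonpos" "b \<in> Dnonpos" "deg_le N f"
    and "a m i \<noteq> 0" "b n i' \<noteq> 0" "f (j - i + int m - i' + int n) \<noteq> 0"
  defines "D \<equiv> nat (N - j)"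
  shows "((m, i), (n, i')) \<in> ({..D} \<times> {-int D..0}) \<times> ({..D} \<times> {-int D..0})"
proof -
  have "i \<le> 0" "i' \<le> 0" "j - i + int m - i' + int n \<le> N"
    using assms(4-6) DnonposD[OF assms(1)] DnonposD[OF assms(2)] deg_leD[OF assms(3)] by auto
  then show ?thesis unfolding D_def by auto
qed

lemma act_act_eq_infsum:
  assumes a: "a \<in> Dnonpos" and b: "b \<in> Dnonpos" and f: "deg_le N f"
  shows "act a (act b f) j = infsum (iter_terms a b f j) (SIGMA x:UNIV. {..fst (fst x)})"
proof -
  define D where "D = nat (N - j)"
  define t where "t = (\<lambda>((m::nat, i::int), (n::nat, i'::int)). a m i * ffact_int (j - i + int m) m *
     (b n i' * ffact_int (j - i + int m - i' + int n) n * f (j - i + int m - i' + int n)))"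
  have "act a (act b f) j = infsum (\<lambda>x. infsum (\<lambda>y. t (x, y)) UNIV) UNIV"
    unfolding act_def t_def by (simp add: infsum_cmult_right'[symmetric] case_prod_unfold)
  also have "\<dots> = infsum t (UNIV \<times> UNIV)"
  proof (rule infsum_Sigma_finite_support[where F="({..D} \<times> {-int D..0}) \<times> ({..D} \<times> {-int D..0})"])
    fix x assume "x \<notin> ({..D} \<times> {-int D..0}) \<times> ({..D} \<times> {-int D..0})"
    moreover obtain m i n i' where "x = ((m, i), (n, i'))" by (metis prod.collapse)
    ultimately show "t x = 0"
      using act_act_support[OF a b f, of m i n i' j] unfolding D_def t_def by fastforce
  qed auto
  also have "\<dots> = infsum (\<lambda>x. infsum (\<lambda>k. iter_terms a b f j (x, k)) {..fst (fst x)}) (UNIV \<times> UNIV)"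
  proof (rule infsum_cong)
    fix x :: "(nat \<times> int) \<times> (nat \<times> int)"
    obtain m i n i' where e: "x = ((m, i), (n, i'))" by (metis prod.collapse)
    have "ffact_int (j - i + int m) m = (\<Sum>k\<le>m. of_nat (m choose k) * ffact_int i' k
        * ffact_int (j - i + int m - i') (m - k))"
      using ffact_int_Vandermonde[of i' "j - i + int m - i'" m] by (simp add: algebra_simps)
    then show "t x = infsum (\<lambda>k. iter_terms a b f j (x, k)) {..fst (fst x)}"
      unfolding e t_def iter_terms_def by (simp add: sum_distrib_left sum_distrib_right)
  qed
  also have "\<dots> = infsum (iter_terms a b f j) (SIGMA x:UNIV \<times> UNIV. {..fst (fst x)})"
  proof (rule infsum_Sigma_finite_support
      [where F="(({..D} \<times> {-int D..0}) \<times> ({..D} \<times> {-int D..0})) \<times> {..D}"])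
    fix x assume x: "x \<in> (SIGMA x:UNIV \<times> UNIV. {..fst (fst x)})"
      "x \<notin> (({..D} \<times> {-int D..0}) \<times> ({..D} \<times> {-int D..0})) \<times> {..D}"
    obtain m i n i' k where e: "x = (((m, i), (n, i')), k)" by (metis prod.collapse)
    then have "k \<le> m" using x(1) by auto
    then show "iter_terms a b f j x = 0"
      using act_act_support[OF a b f, of m i n i' j] x(2) e unfolding D_def iter_terms_def by fastforce
  qed auto
  finally show ?thesis by (simp only: UNIV_Times_UNIV)
qed

text \<open>The two families of terms agree after the substitution
  \<open>r = n + m - k\<close>, \<open>q = i' + i - k\<close>.\<close>
lemma infsum_iter_terms_eq_comp_terms:
  "infsum (iter_terms a b f j) (SIGMA x:UNIV. {..fst (fst x)})
     = infsum (comp_terms a b f j) (SIGMA x:UNIV. comp_index (fst x))"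
proof (rule infsum_reindex_bij_witness[where
      j = "\<lambda>(((m, i), (n, i')), k). ((n + m - k, i' + i - int k), (m, k, i))" and
      i = "\<lambda>((r, q), (m, k, i)). (((m, i), (r + k - m, q - i + int k)), k)"])
  fix x :: "((nat \<times> int) \<times> (nat \<times> int)) \<times> nat"
  assume x: "x \<in> (SIGMA x:UNIV. {..fst (fst x)})"
  obtain m i n i' k where e: "x = (((m, i), (n, i')), k)" by (metis prod.collapse)
  have km: "k \<le> m" using x e by simp
  show "(\<lambda>((r, q), (m, k, i)). (((m, i), (r + k - m, q - i + int k)), k))
        ((\<lambda>(((m, i), (n, i')), k). ((n + m - k, i' + i - int k), (m, k, i))) x) = x"
    using km e by auto
  show "(\<lambda>(((m, i), (n, i')), k). ((n + m - k, i' + i - int k), (m, k, i))) x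
      \<in> (SIGMA x:UNIV. comp_index (fst x))"
    using km e by (auto simp: comp_index_def)
  have "ffact_int (j - i + int m - i' + int n) (n + m - k) =
      ffact_int (j - i + int m - i' + int n) n * ffact_int (j - i + int m - i') (m - k)"
    using ffact_int_add[of _ n "m - k"] km by (simp add: Nat.add_diff_assoc)
  moreover have "n + m - k + k - m = n" "int (n + m - k) = int n + int m - int k"
    using km by auto
  ultimately show "comp_terms a b f j
      ((\<lambda>(((m, i), (n, i')), k). ((n + m - k, i' + i - int k), (m, k, i))) x) = iter_terms a b f j x"
    unfolding e comp_terms_def iter_terms_def by (simp add: algebra_simps)
next
  fix y :: "(nat \<times> int) \<times> (nat \<times> nat \<times> int)"
  assume y: "y \<in> (SIGMA x:UNIV. comp_index (fst x))"
  obtain r q m k i where e: "y = ((r, q), (m, k, i))" by (metis prod.collapse)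
  have s: "k \<le> m" "m \<le> r + k" using y e by (auto simp: comp_index_def)
  show "(\<lambda>(((m, i), (n, i')), k). ((n + m - k, i' + i - int k), (m, k, i)))
        ((\<lambda>((r, q), (m, k, i)). (((m, i), (r + k - m, q - i + int k)), k)) y) = y"
    using s e by auto
  show "(\<lambda>((r, q), (m, k, i)). (((m, i), (r + k - m, q - i + int k)), k)) y
      \<in> (SIGMA x:UNIV. {..fst (fst x)})"
    using s e by auto
qed

lemma act_comp_op:
  assumes "a \<in> Dnonpos" "b \<in> Dnonpos" "deg_le N f"
  shows "act (comp_op a b) f = act a (act b f)"
  using act_comp_op_eq_infsum[OF assms] act_act_eq_infsum[OF assms]
    infsum_iter_terms_eq_comp_terms by (simp add: fun_eq_iff)

lemma downward_recursion_fixpoint: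
  fixes F :: "(int \<Rightarrow> 'b) \<Rightarrow> int \<Rightarrow> 'b" and T :: int
  assumes loc: "\<And>f g j. (\<And>l. j < l \<Longrightarrow> l < T \<Longrightarrow> f l = g l) \<Longrightarrow> F f j = F g j"
  shows "\<exists>h. \<forall>j. h j = F h j"
proof -
  define it where "it n = (F ^^ n) (\<lambda>_. undefined)" for n
  have itS: "it (Suc n) = F (it n)" for n unfolding it_def by simp
  have stable: "\<forall>j m. T - j \<le> int n \<longrightarrow> n \<le> m \<longrightarrow> it (Suc m) j = it (Suc n) j" for n
  proof (induction n)
    case 0
    show ?case
    proof (intro allI impI)
      fix j and m :: nat assume "T - j \<le> int 0"
      then show "it (Suc m) j = it (Suc 0) j" unfolding itS by (intro loc) auto
    qed
  next
    case (Suc n)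
    show ?case
    proof (intro allI impI)
      fix j m assume jm: "T - j \<le> int (Suc n)" "Suc n \<le> m"
      then obtain m' where m': "m = Suc m'" "n \<le> m'" by (cases m) auto
      show "it (Suc m) j = it (Suc (Suc n)) j"
        unfolding itS[of m] itS[of "Suc n"]
      proof (rule loc)
        fix l assume "j < l" "l < T"
        then have "T - l \<le> int n" using jm by simp
        then show "it m l = it (Suc n) l" using Suc.IH m' by blast
      qed
    qed
  qed
  define h where "h j = it (Suc (nat (T - j))) j" for j
  have "h j = F h j" for j
  proof -
    have "h j = F (it (nat (T - j))) j" unfolding h_def itS ..
    also have "\<dots> = F h j"
    proof (rule loc)
      fix l assume l: "j < l" "l < T"
      then obtain k where k: "nat (T - j) = Suc k" "nat (T - l) \<le> k" by (cases "nat (T - j)") auto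
      have "it (Suc k) l = it (Suc (nat (T - l))) l"
        by (rule stable[of "nat (T - l)", rule_format]) (use k(2) in auto)
      then show "it (nat (T - j)) l = h l" unfolding h_def k(1) by simp
    qed
    finally show ?thesis .
  qed
  then show ?thesis by blast
qed

section \<open>Solutions of \<open>P\<cdot>\<Psi> = 0\<close>\<close>

lemma PclassD: "P \<in> Pclass \<Longrightarrow> -2 < i \<Longrightarrow> P m i = dz_op m i"
  unfolding Pclass_def by auto

lemma Pclass_Dnonpos: "P \<in> Pclass \<Longrightarrow> P \<in> Dnonpos"
  unfolding Dnonpos_def using PclassD[of P] by (auto simp: dz_op_def)

text \<open>The contribution of the part \<open>z\<^sup>-\<^sup>1 D\<^sub>-\<close> of \<open>P\<close> to the coefficient of \<open>z\<^sup>j\<^sup>-\<^sup>1\<close>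
  in \<open>P\<cdot>f\<close>.\<close>
definition lower_part :: "dop \<Rightarrow> laurent \<Rightarrow> int \<Rightarrow> complex" where
  "lower_part P f j = infsum (\<lambda>(m::nat, i::int).
     if i \<le> -2 then P m i * ffact_int (j - 1 - i + int m) m * f (j - 1 - i + int m) else 0) UNIV"

lemma lower_part_cong:
  assumes "\<And>l. j < l \<Longrightarrow> f l = g l"
  shows "lower_part P f j = lower_part P g j"
proof -
  have "(\<lambda>(m::nat, i::int). if i \<le> -2 then P m i * ffact_int (j - 1 - i + int m) m * f (j - 1 - i + int m) else 0)
      = (\<lambda>(m::nat, i::int). if i \<le> -2 then P m i * ffact_int (j - 1 - i + int m) m * g (j - 1 - i + int m) else 0)"
    using assms by (auto simp: fun_eq_iff)
  then show ?thesis unfolding lower_part_def by simp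
qed

lemma lower_part_eq_0:
  assumes "\<And>l. j < l \<Longrightarrow> f l = 0"
  shows "lower_part P f j = 0"
  unfolding lower_part_def
proof (rule infsum_0, clarify)
  fix m :: nat and i :: int
  show "(if i \<le> -2 then P m i * ffact_int (j - 1 - i + int m) m * f (j - 1 - i + int m) else 0) = 0"
    using assms[of "j - 1 - i + int m"] by auto
qed

lemma act_Pclass:
  assumes P: "P \<in> Pclass" and f: "deg_le N f"
  shows "act P f (j - 1) = of_int j * f j + lower_part P f j"
proof -
  let ?g = "\<lambda>(m::nat, i::int). P m i * ffact_int (j - 1 - i + int m) m * f (j - 1 - i + int m)"
  let ?g1 = "\<lambda>x. if x = (1::nat, 0::int) then ?g x else 0"
  let ?g2 = "\<lambda>(m::nat, i::int).
    if i \<le> -2 then P m i * ffact_int (j - 1 - i + int m) m * f (j - 1 - i + int m) else 0"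
  let ?F = "{..nat (N - (j - 1))} \<times> {- int (nat (N - (j - 1)))..0}"
  have split: "?g x = ?g1 x + ?g2 x" for x
  proof -
    obtain m i where x: "x = (m, i)" by fastforce
    show ?thesis
    proof (cases "-2 < i")
      case True
      then have "P m i = dz_op m i" by (rule PclassD[OF P])
      with True x show ?thesis by (auto simp: dz_op_def)
    next
      case False
      then have "x \<noteq> (1, 0)" using x by auto
      with False x show ?thesis by simp
    qed
  qed
  have s1: "?g1 summable_on UNIV" by (rule summable_on_finite_support[where F="{(1, 0)}"]) auto
  have s2: "?g2 summable_on UNIV"
  proof (rule summable_on_finite_support[where F="?F"])
    fix x assume x: "x \<notin> ?F"
    obtain m i where e: "x = (m, i)" by fastforce
    show "?g2 x = 0"
    proof (rule ccontr)
      assume "?g2 x \<noteq> 0"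
      then have "P m i * ffact_int (j - 1 - i + int m) m * f (j - 1 - i + int m) \<noteq> 0"
        using e by (auto split: if_splits)
      from act_support[OF Pclass_Dnonpos[OF P] f this] x e show False by simp
    qed
  qed auto
  have "act P f (j - 1) = infsum (\<lambda>x. ?g1 x + ?g2 x) UNIV"
    unfolding act_def by (rule infsum_cong) (rule split)
  also have "\<dots> = infsum ?g1 UNIV + infsum ?g2 UNIV" by (rule infsum_add[OF s1 s2])
  also have "infsum ?g1 UNIV = of_int j * f j"
  proof -
    have "infsum ?g1 UNIV = sum ?g1 (UNIV \<inter> {(1, 0)})" by (rule infsum_finite_support) auto
    then show ?thesis using PclassD[OF P, of 0 1] by (simp add: dz_op_def ffact_int_Suc)
  qed
  also have "infsum ?g2 UNIV = lower_part P f j" unfolding lower_part_def ..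
  finally show ?thesis .
qed

lemma Pclass_kernel_eq_0:
  assumes P: "P \<in> Pclass" and D: "D \<in> Hsp" "D 0 = 0" "act P D = (\<lambda>_. 0)"
  shows "D = (\<lambda>_. 0)"
proof -
  obtain N where N: "deg_le N D" using D(1) Hsp_iff_deg_le by blast
  show ?thesis
  proof (rule deg_le_vanishes[OF N])
    fix j assume above: "\<And>l. j < l \<Longrightarrow> D l = 0"
    have "of_int j * D j = 0"
      using act_Pclass[OF P N, of j] lower_part_eq_0[OF above] D(3) by simp
    then show "D j = 0" using D(2) by (cases "j = 0") auto
  qed
qed

lemma onePlusHm_Hsp: "f \<in> onePlusHm \<Longrightarrow> f \<in> Hsp"
  using onePlusHm_deg_le Hsp_iff_deg_le by blast

lemma Pclass_kernel_multiple:
  assumes P: "P \<in> Pclass" and h: "h \<in> onePlusHm" "act P h = (\<lambda>_. 0)"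
    and \<Psi>: "\<Psi> \<in> Hsp" "act P \<Psi> = (\<lambda>_. 0)"
  shows "\<Psi> = (\<lambda>n. \<Psi> 0 * h n)"
proof -
  define D where "D = (\<lambda>n. \<Psi> n + (- \<Psi> 0) * h n)"
  have "D \<in> Hsp" unfolding D_def by (rule Hsp_lincomb[OF \<Psi>(1) onePlusHm_Hsp[OF h(1)]])
  moreover have "D 0 = 0" using h(1) unfolding D_def onePlusHm_def by simp
  moreover have "act P D = (\<lambda>_. 0)"
    unfolding D_def act_lincomb[OF Pclass_Dnonpos[OF P] \<Psi>(1) onePlusHm_Hsp[OF h(1)]] \<Psi>(2) h(2)
    by simp
  ultimately have "D = (\<lambda>_. 0)" by (rule Pclass_kernel_eq_0[OF P])
  then have "\<Psi> n = \<Psi> 0 * h n" for n using fun_cong[of D _ n] unfolding D_def by simp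
  then show ?thesis by (rule ext)
qed

lemma Pclass_kernel_proportional:
  assumes P: "P \<in> Pclass" and h: "h \<in> onePlusHm" "act P h = (\<lambda>_. 0)"
    and \<Psi>: "\<Psi>1 \<in> Hsp" "\<Psi>2 \<in> Hsp" "\<Psi>1 \<noteq> (\<lambda>_. 0)" "act P \<Psi>1 = (\<lambda>_. 0)" "act P \<Psi>2 = (\<lambda>_. 0)"
  shows "\<exists>c. \<Psi>2 = (\<lambda>n. c * \<Psi>1 n)"
proof -
  have e1: "\<Psi>1 = (\<lambda>n. \<Psi>1 0 * h n)" and e2: "\<Psi>2 = (\<lambda>n. \<Psi>2 0 * h n)"
    using Pclass_kernel_multiple[OF P h] \<Psi> by blast+
  have "\<Psi>1 0 \<noteq> 0"
  proof
    assume "\<Psi>1 0 = 0"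
    with e1 have "\<Psi>1 = (\<lambda>_. 0)" by simp
    with \<Psi>(3) show False ..
  qed
  then have "\<Psi>2 = (\<lambda>n. (\<Psi>2 0 / \<Psi>1 0) * \<Psi>1 n)"
    by (subst e1, subst e2) (simp add: fun_eq_iff)
  then show ?thesis by blast
qed

text \<open>Read off from \<open>act_Pclass\<close>; truncating the argument to degrees \<open>\<le> 0\<close> makes the value
  at \<open>j\<close> depend only on the finitely many values at \<open>j < l \<le> 0\<close>.\<close>
definition solution_step :: "dop \<Rightarrow> laurent \<Rightarrow> int \<Rightarrow> complex" where
  "solution_step P f j = (if 0 < j then 0 else if j = 0 then 1 else
     - lower_part P (\<lambda>l. if l \<le> 0 then f l else 0) j / of_int j)"

lemma Pclass_solution_exists:
  assumes P: "P \<in> Pclass"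
  shows "\<exists>\<Psi>\<in>onePlusHm. act P \<Psi> = (\<lambda>_. 0)"
proof -
  have "\<exists>h. \<forall>j. h j = solution_step P h j"
  proof (rule downward_recursion_fixpoint[where T=1])
    fix f g :: laurent and j assume fg: "\<And>l. j < l \<Longrightarrow> l < 1 \<Longrightarrow> f l = g l"
    have "lower_part P (\<lambda>l. if l \<le> 0 then f l else 0) j = lower_part P (\<lambda>l. if l \<le> 0 then g l else 0) j"
      by (rule lower_part_cong) (simp add: fg)
    then show "solution_step P f j = solution_step P g j" unfolding solution_step_def by simp
  qed
  then obtain h where h: "\<And>j. h j = solution_step P h j" by blast
  have h_pos: "h l = 0" if "0 < l" for l using h[of l] that by (simp add: solution_step_def)
  then have trunc: "(\<lambda>l. if l \<le> 0 then h l else 0) = h" by (auto simp: fun_eq_iff)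
  have h0: "h 0 = 1" using h[of 0] by (simp add: solution_step_def)
  have deg: "deg_le 0 h" unfolding deg_le_def using h_pos by auto
  have act_h: "act P h (j - 1) = 0" for j
  proof (cases "j < 0")
    case True
    then have "h j = - lower_part P h j / of_int j"
      using h[of j] trunc by (simp add: solution_step_def)
    with True show ?thesis using act_Pclass[OF P deg, of j] by (simp add: field_simps)
  next
    case False
    then have "lower_part P h j = 0" by (intro lower_part_eq_0 h_pos) simp
    moreover have "of_int j * h j = 0" using False h_pos[of j] by (cases "j = 0") auto
    ultimately show ?thesis using act_Pclass[OF P deg, of j] by simp
  qed
  have "act P h = (\<lambda>_. 0)"
  proof
    fix j show "act P h j = 0" using act_h[of "j + 1"] by simp
  qed
  moreover have "h \<in> onePlusHm" unfolding onePlusHm_def using h0 h_pos by auto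
  ultimately show ?thesis by blast
qed

section \<open>Operators in \<open>1 + D\<^sub>-\<close>\<close>

definition onePlusDm :: "dop set" where
  "onePlusDm = {G. \<forall>m i. 0 \<le> i \<longrightarrow> G m i = one_op m i}"

lemma onePlusDm_iff: "G \<in> onePlusDm \<longleftrightarrow> minus_op G one_op \<in> Dminus"
  unfolding onePlusDm_def Dminus_def Hminus_def minus_op_def by auto

lemma onePlusDmD: "G \<in> onePlusDm \<Longrightarrow> 0 \<le> i \<Longrightarrow> G m i = one_op m i"
  unfolding onePlusDm_def by auto

lemma onePlusDm_Dnonpos: "G \<in> onePlusDm \<Longrightarrow> G \<in> Dnonpos"
  unfolding Dnonpos_def onePlusDm_def one_op_def by auto

lemma onePlusDm_deg_le: "G \<in> onePlusDm \<Longrightarrow> deg_le 0 (G m)"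
  unfolding deg_le_def using onePlusDmD[of G] by (auto simp: one_op_def)

lemma onePlusDm_Dsp: "G \<in> onePlusDm \<Longrightarrow> G \<in> Dsp"
  unfolding Dsp_def using onePlusDm_deg_le Hsp_iff_deg_le by blast

lemma act_onePlusDm_top:
  assumes G: "G \<in> onePlusDm" and h: "\<And>l. j < l \<Longrightarrow> h l = 0"
  shows "act G h j = h j"
proof -
  let ?g = "\<lambda>(m::nat, i::int). G m i * ffact_int (j - i + int m) m * h (j - i + int m)"
  have "act G h j = sum ?g (UNIV \<inter> {(0, 0)})"
    unfolding act_def
  proof (rule infsum_finite_support)
    fix x assume x: "x \<notin> {(0::nat, 0::int)}"
    obtain m i where e: "x = (m, i)" by fastforce
    show "?g x = 0"
    proof (cases "0 \<le> i")
      case True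
      then show ?thesis using onePlusDmD[OF G True, of m] x e by (auto simp: one_op_def)
    next
      case False
      then show ?thesis using e h[of "j - i + int m"] by auto
    qed
  qed auto
  also have "\<dots> = h j" using onePlusDmD[OF G, of 0 0] by (simp add: one_op_def)
  finally show ?thesis .
qed

lemma act_onePlusDm_zpow:
  assumes G: "G \<in> onePlusDm"
  shows "act G (zpow d) (int d) = 1" and "\<And>j. int d < j \<Longrightarrow> act G (zpow d) j = 0"
proof -
  show "act G (zpow d) (int d) = 1"
    using act_onePlusDm_top[OF G, of "int d" "zpow d"] by (auto simp: zpow_def)
  show "act G (zpow d) j = 0" if "int d < j" for j
    using act_deg_le[OF onePlusDm_Dnonpos[OF G] deg_le_zpow[of d]] that unfolding deg_le_def by auto
qed

lemma act_onePlusDm_inj: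
  assumes G: "G \<in> onePlusDm" and "u \<in> Hsp" "v \<in> Hsp" and e: "act G u = act G v"
  shows "u = v"
proof -
  define w where "w = (\<lambda>n. u n + (-1) * v n)"
  have "act G w = (\<lambda>_. 0)"
    unfolding w_def act_lincomb[OF onePlusDm_Dnonpos[OF G] assms(2,3)] e by simp
  obtain N where N: "deg_le N w"
    using Hsp_lincomb[OF assms(2,3)] Hsp_iff_deg_le unfolding w_def by blast
  have "w = (\<lambda>_. 0)"
  proof (rule deg_le_vanishes[OF N])
    fix j assume "\<And>l. j < l \<Longrightarrow> w l = 0"
    then show "w j = 0" using act_onePlusDm_top[OF G] \<open>act G w = (\<lambda>_. 0)\<close> by metis
  qed
  then show ?thesis unfolding w_def by (simp add: fun_eq_iff)
qed

section \<open>Sato's operator\<close>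

lemma Gr0D:
  assumes "W \<in> Gr0"
  shows "W \<subseteq> Hsp" "(\<lambda>n. 0) \<in> W" "\<And>f g. f \<in> W \<Longrightarrow> g \<in> W \<Longrightarrow> (\<lambda>n. f n + g n) \<in> W"
    "\<And>c f. f \<in> W \<Longrightarrow> (\<lambda>n. c * f n) \<in> W" "bij_betw pplus W Hplus"
  using assms unfolding Gr0_def csubspace_H_def by auto

lemma Gr0_eq_if_pplus_eq:
  assumes "W \<in> Gr0" "w \<in> W" "w' \<in> W" "pplus w = pplus w'"
  shows "w = w'"
  using Gr0D(5)[OF assms(1)] assms(2-4) unfolding bij_betw_def inj_on_def by blast

lemma Gr0_eq_0_if_pplus_eq_0:
  assumes W: "W \<in> Gr0" and w: "w \<in> W" and z: "\<And>l. 0 \<le> l \<Longrightarrow> w l = 0"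
  shows "w = (\<lambda>_. 0)"
proof (rule Gr0_eq_if_pplus_eq[OF W w Gr0D(2)[OF W]])
  show "pplus w = pplus (\<lambda>_. 0)" unfolding pplus_def using z by auto
qed

definition Gr_section :: "laurent set \<Rightarrow> laurent \<Rightarrow> laurent" where
  "Gr_section W p = the_inv_into W pplus p"

lemma Gr_section:
  assumes W: "W \<in> Gr0" and p: "p \<in> Hplus"
  shows "Gr_section W p \<in> W" "pplus (Gr_section W p) = p"
proof -
  have b: "bij_betw pplus W Hplus" by (rule Gr0D(5)[OF W])
  show "Gr_section W p \<in> W" unfolding Gr_section_def
    by (rule the_inv_into_into) (use b p in \<open>auto simp: bij_betw_def\<close>)
  show "pplus (Gr_section W p) = p" unfolding Gr_section_def
    by (rule f_the_inv_into_f_bij_betw[OF b p])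
qed

lemma pplus_Hplus: "deg_le N f \<Longrightarrow> pplus f \<in> Hplus"
  unfolding Hplus_def Hsp_def pplus_def deg_le_def by auto

lemma Hplus_Hsp: "h \<in> Hplus \<Longrightarrow> h \<in> Hsp"
  unfolding Hplus_def by auto

lemma Hplus_lincomb: "f \<in> Hplus \<Longrightarrow> g \<in> Hplus \<Longrightarrow> (\<lambda>n. f n + c * g n) \<in> Hplus"
  unfolding Hplus_def using Hsp_lincomb by auto

lemma zpow_Hplus: "zpow n \<in> Hplus"
  unfolding Hplus_def Hsp_def zpow_def by auto

lemma Hplus_induct [consumes 1, case_names zero add_monomial]:
  assumes h: "h \<in> Hplus" and zero: "P (\<lambda>_. 0)"
    and add_monomial: "\<And>h c d. h \<in> Hplus \<Longrightarrow> P h \<Longrightarrow> P (\<lambda>l. h l + c * zpow d l)"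
  shows "P h"
proof -
  have "\<forall>h \<in> Hplus. (\<forall>l. int d \<le> l \<longrightarrow> h l = 0) \<longrightarrow> P h" for d
  proof (induction d)
    case 0
    have "h = (\<lambda>_. 0)" if "h \<in> Hplus" "\<forall>l. 0 \<le> l \<longrightarrow> h l = 0" for h
    proof
      fix l show "h l = 0" using that unfolding Hplus_def by (cases "0 \<le> l") auto
    qed
    then show ?case using zero by auto
  next
    case (Suc d)
    show ?case
    proof (intro ballI impI)
      fix h assume h: "h \<in> Hplus" "\<forall>l. int (Suc d) \<le> l \<longrightarrow> h l = 0"
      define h' where "h' = (\<lambda>l. if l = int d then 0 else h l)"
      have "h' \<in> Hplus" using h(1) unfolding Hplus_def Hsp_def h'_def by auto
      moreover have "\<forall>l. int d \<le> l \<longrightarrow> h' l = 0" using h(2) unfolding h'_def by auto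
      ultimately have "P (\<lambda>l. h' l + h (int d) * zpow d l)" using Suc add_monomial by blast
      moreover have "h = (\<lambda>l. h' l + h (int d) * zpow d l)"
        unfolding h'_def zpow_def by (auto simp: fun_eq_iff)
      ultimately show "P h" by simp
    qed
  qed
  moreover obtain N where "deg_le N h" using Hplus_Hsp[OF h] Hsp_iff_deg_le by blast
  then have "\<forall>l. int (nat (N + 1)) \<le> l \<longrightarrow> h l = 0" unfolding deg_le_def by auto
  ultimately show ?thesis using h by blast
qed

lemma sato_unique:
  assumes W: "W \<in> Gr0" and G: "G \<in> onePlusDm" and G': "G' \<in> onePlusDm"
    and GW: "\<And>n. act G (zpow n) \<in> W" and G'W: "\<And>n. act G' (zpow n) \<in> W"
  shows "G = G'"
proof -
  have "G m = G' m" for m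
  proof (induction m rule: less_induct)
    case (less m)
    define v where "v = (\<lambda>j. act G (zpow m) j + (-1) * act G' (zpow m) j)"
    have vW: "v \<in> W" unfolding v_def by (rule Gr0D(3)[OF W GW Gr0D(4)[OF W G'W]])
    have "(\<Sum>m'<m. G m' (j - int m + int m') * ffact_int (int m) m') =
          (\<Sum>m'<m. G' m' (j - int m + int m') * ffact_int (int m) m')" for j
      using less by (intro sum.cong) auto
    then have ve: "v j = (G m j - G' m j) * fact m" for j
      unfolding v_def act_zpow_eq by (simp add: algebra_simps)
    have "v = (\<lambda>_. 0)"
      by (rule Gr0_eq_0_if_pplus_eq_0[OF W vW]) (simp add: ve onePlusDmD[OF G] onePlusDmD[OF G'])
    then show ?case using ve by (simp add: fun_eq_iff)
  qed
  then show ?thesis by (rule ext)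
qed

text \<open>The rows \<open>m < n\<close> of \<open>G\<close> applied to \<open>z\<^sup>n\<close>, i.e. \<open>G\<cdot>z\<^sup>n - n! G\<^sub>n\<close>.\<close>
definition partial_act :: "nat \<Rightarrow> dop \<Rightarrow> laurent" where
  "partial_act n a = (\<lambda>l. \<Sum>m<n. a m (l - int n + int m) * ffact_int (int n) m)"

text \<open>Row \<open>n\<close> of Sato's operator is forced by \<open>G\<cdot>z\<^sup>n \<in> W\<close>: as \<open>G\<^sub>n \<in> \<delta>\<^sub>n\<^sub>0 + H\<^sub>-\<close>,
  the \<open>H\<^sub>+\<close>-part of \<open>G\<cdot>z\<^sup>n\<close> is \<open>sato_target n G\<close>, and \<open>G\<cdot>z\<^sup>n\<close> must be its section in \<open>W\<close>.\<close>
definition sato_target :: "nat \<Rightarrow> dop \<Rightarrow> laurent" where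
  "sato_target n a = pplus (\<lambda>l. partial_act n a l + (if n = 0 \<and> l = 0 then 1 else 0))"

definition sato_step :: "laurent set \<Rightarrow> (int \<Rightarrow> laurent) \<Rightarrow> int \<Rightarrow> laurent" where
  "sato_step W A j = (if 0 < j then (\<lambda>_. 0) else
     (\<lambda>l. (Gr_section W (sato_target (nat (-j)) (\<lambda>m. A (- int m))) l
            - partial_act (nat (-j)) (\<lambda>m. A (- int m)) l) / fact (nat (-j))))"

lemma partial_act_cong: "(\<And>m. m < n \<Longrightarrow> a m = a' m) \<Longrightarrow> partial_act n a = partial_act n a'"
  unfolding partial_act_def by (intro ext sum.cong) auto

lemma sato_step_cong:
  assumes "\<And>l. j < l \<Longrightarrow> l < 1 \<Longrightarrow> A l = A' l"
  shows "sato_step W A j = sato_step W A' j"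
proof (cases "0 < j")
  case False
  then have "partial_act (nat (-j)) (\<lambda>m. A (- int m)) = partial_act (nat (-j)) (\<lambda>m. A' (- int m))"
    using assms by (intro partial_act_cong) auto
  then show ?thesis unfolding sato_step_def sato_target_def by simp
qed (simp add: sato_step_def)

lemma partial_act_deg_le:
  assumes "\<And>m. m < n \<Longrightarrow> deg_le 0 (a m)"
  shows "deg_le (int n) (partial_act n a)"
  using assms unfolding deg_le_def partial_act_def by (auto intro!: sum.neutral)

lemma sato_target_Hplus:
  assumes "\<And>m. m < n \<Longrightarrow> deg_le 0 (a m)"
  shows "sato_target n a \<in> Hplus"
  unfolding sato_target_def
  by (rule pplus_Hplus[where N="int n"]) (use partial_act_deg_le[OF assms] in \<open>auto simp: deg_le_def\<close>)

lemma sato_exists: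
  assumes W: "W \<in> Gr0"
  shows "\<exists>G\<in>onePlusDm. \<forall>n. act G (zpow n) \<in> W"
proof -
  obtain A where A: "\<And>j. A j = sato_step W A j"
    using downward_recursion_fixpoint[where F="sato_step W" and T=1] sato_step_cong by blast
  define G where "G = (\<lambda>m. A (- int m))"
  have Gn: "G n = (\<lambda>l. (Gr_section W (sato_target n G) l - partial_act n G l) / fact n)" for n
    using A[of "- int n"] unfolding G_def sato_step_def by simp
  have G_top: "G n l = one_op n l" if "0 \<le> l" for n l
    using that
  proof (induction n arbitrary: l rule: less_induct)
    case (less n)
    have "sato_target n G \<in> Hplus"
      by (rule sato_target_Hplus) (use less in \<open>auto simp: deg_le_def one_op_def\<close>)
    then have "Gr_section W (sato_target n G) l = sato_target n G l"
      using fun_cong[OF Gr_section(2)[OF W], of _ l] less.prems by (simp add: pplus_def)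
    then show ?case
      using fun_cong[OF Gn[of n], of l] less.prems by (auto simp: sato_target_def pplus_def one_op_def)
  qed
  then have G: "G \<in> onePlusDm" unfolding onePlusDm_def by auto
  have "act G (zpow n) = Gr_section W (sato_target n G)" for n
    using Gn[of n] by (simp add: fun_eq_iff act_zpow_eq partial_act_def)
  then have "act G (zpow n) \<in> W" for n
    using Gr_section(1)[OF W sato_target_Hplus[OF onePlusDm_deg_le[OF G]]] by simp
  with G show ?thesis by blast
qed

lemma act_onePlusDm_Hplus:
  assumes W: "W \<in> Gr0" and G: "G \<in> onePlusDm" and GW: "\<And>n. act G (zpow n) \<in> W"
    and h: "h \<in> Hplus"
  shows "act G h \<in> W"
  using h
proof (induction rule: Hplus_induct)
  case zero
  then show ?case using act_zero Gr0D(2)[OF W] by simp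
next
  case (add_monomial h c d)
  then show ?case
    unfolding act_lincomb[OF onePlusDm_Dnonpos[OF G] Hplus_Hsp[OF add_monomial(1)] Hplus_Hsp[OF zpow_Hplus]]
    by (intro Gr0D(3)[OF W] Gr0D(4)[OF W] GW)
qed

lemma Gr0_subset_act_onePlusDm:
  assumes W: "W \<in> Gr0" and G: "G \<in> onePlusDm" and GW: "\<And>n. act G (zpow n) \<in> W"
    and w: "w \<in> W"
  shows "\<exists>h\<in>Hplus. act G h = w"
proof -
  have "\<forall>w\<in>W. (\<forall>l. int d \<le> l \<longrightarrow> w l = 0) \<longrightarrow> (\<exists>h\<in>Hplus. act G h = w)" for d
  proof (induction d)
    case 0
    have "(\<lambda>_. 0) \<in> Hplus" unfolding Hplus_def Hsp_def by auto
    then show ?case using Gr0_eq_0_if_pplus_eq_0[OF W] act_zero by fastforce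
  next
    case (Suc d)
    show ?case
    proof (intro ballI impI)
      fix w assume w: "w \<in> W" "\<forall>l. int (Suc d) \<le> l \<longrightarrow> w l = 0"
      define c where "c = w (int d)"
      define w' where "w' = (\<lambda>l. w l + (- c) * act G (zpow d) l)"
      have "w' \<in> W" unfolding w'_def by (rule Gr0D(3)[OF W w(1) Gr0D(4)[OF W GW]])
      moreover have "\<forall>l. int d \<le> l \<longrightarrow> w' l = 0"
      proof (intro allI impI)
        fix l assume "int d \<le> l"
        then consider "l = int d" | "int d < l" "int (Suc d) \<le> l" by linarith
        then show "w' l = 0"
          using w(2) act_onePlusDm_zpow[OF G] unfolding w'_def c_def by cases auto
      qed
      ultimately obtain h' where h': "h' \<in> Hplus" "act G h' = w'" using Suc by blast
      have "act G (\<lambda>l. h' l + c * zpow d l) = w"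
        unfolding act_lincomb[OF onePlusDm_Dnonpos[OF G] Hplus_Hsp[OF h'(1)] Hplus_Hsp[OF zpow_Hplus]]
          h'(2) w'_def by (simp add: fun_eq_iff)
      moreover have "(\<lambda>l. h' l + c * zpow d l) \<in> Hplus"
        by (rule Hplus_lincomb[OF h'(1) zpow_Hplus])
      ultimately show "\<exists>h\<in>Hplus. act G h = w" by blast
    qed
  qed
  moreover obtain N where "deg_le N w" using Gr0D(1)[OF W] w Hsp_iff_deg_le by blast
  then have "\<forall>l. int (nat (N + 1)) \<le> l \<longrightarrow> w l = 0" unfolding deg_le_def by auto
  ultimately show ?thesis using w by blast
qed

lemma satoG:
  assumes W: "W \<in> Gr0"
  shows "satoG W \<in> onePlusDm" "\<And>n. act (satoG W) (zpow n) \<in> W" "W = act (satoG W) ` Hplus"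
proof -
  obtain G where G: "G \<in> onePlusDm" "\<And>n. act G (zpow n) \<in> W" using sato_exists[OF W] by blast
  have WG: "W = act G ` Hplus"
    using Gr0_subset_act_onePlusDm[OF W G] act_onePlusDm_Hplus[OF W G] by blast
  have "satoG W = G" unfolding satoG_def
  proof (rule the_equality)
    show "G \<in> Dsp \<and> minus_op G one_op \<in> Dminus \<and> W = act G ` Hplus"
      using onePlusDm_Dsp[OF G(1)] onePlusDm_iff G(1) WG by blast
  next
    fix G' assume G': "G' \<in> Dsp \<and> minus_op G' one_op \<in> Dminus \<and> W = act G' ` Hplus"
    then have "G' \<in> onePlusDm" "act G' (zpow n) \<in> W" for n using onePlusDm_iff zpow_Hplus by blast+
    then show "G' = G" using sato_unique[OF W _ G(1) _ G(2)] by blast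
  qed
  then show "satoG W \<in> onePlusDm" "\<And>n. act (satoG W) (zpow n) \<in> W" "W = act (satoG W) ` Hplus"
    using G WG by auto
qed

section \<open>The inverse of Sato's operator\<close>

text \<open>The equation \<open>K = 1 - (G - 1)\<circ>K\<close> determines the coefficient \<open>K\<^sub>r\<^sub>,\<^sub>j\<close> from the
  \<open>K\<^sub>r\<^sub>',\<^sub>l\<close> with \<open>l > j\<close>, because \<open>G - 1\<close> has only negative powers of \<open>z\<close>;
  here \<open>h j r\<close> stands for \<open>K\<^sub>r\<^sub>,\<^sub>j\<close>.\<close>
definition inverse_step :: "dop \<Rightarrow> (int \<Rightarrow> nat \<Rightarrow> complex) \<Rightarrow> int \<Rightarrow> nat \<Rightarrow> complex" where
  "inverse_step L h j = (\<lambda>r. one_op r j - comp_op L (\<lambda>r' l. if l \<le> 0 then h l r' else 0) r j)"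

lemma inverse_step_cong:
  assumes L: "\<And>m i. 0 \<le> i \<Longrightarrow> L m i = 0" and e: "\<And>l. j < l \<Longrightarrow> l < 1 \<Longrightarrow> h l = h' l"
  shows "inverse_step L h j = inverse_step L h' j"
proof -
  have "comp_op L (\<lambda>r' l. if l \<le> 0 then h l r' else 0) r j
      = comp_op L (\<lambda>r' l. if l \<le> 0 then h' l r' else 0) r j" for r
    unfolding comp_op_eq
  proof (rule infsum_cong, clarify)
    fix m k i
    show "of_nat (m choose k) * L m i * ffact_int (j - i + int k) k
          * (if j - i + int k \<le> 0 then h (j - i + int k) (r + k - m) else 0) =
          of_nat (m choose k) * L m i * ffact_int (j - i + int k) k
          * (if j - i + int k \<le> 0 then h' (j - i + int k) (r + k - m) else 0)"
      using L[of i m] e[of "j - i + int k"] by (cases "0 \<le> i") auto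
  qed
  then show ?thesis unfolding inverse_step_def by simp
qed

lemma comp_op_eq_0_if_nonneg:
  assumes L: "\<And>m i. 0 \<le> i \<Longrightarrow> L m i = 0" and b: "\<And>r l. 0 < l \<Longrightarrow> b r l = 0" and j: "0 \<le> j"
  shows "comp_op L b r j = 0"
  unfolding comp_op_eq
proof (rule infsum_0, clarify)
  fix m k i
  show "of_nat (m choose k) * L m i * ffact_int (j - i + int k) k * b (r + k - m) (j - i + int k) = 0"
    using L[of i m] b[of "j - i + int k"] j by (cases "0 \<le> i") auto
qed

lemma right_inverse_exists:
  assumes G: "G \<in> onePlusDm"
  shows "\<exists>K\<in>onePlusDm. comp_op G K = one_op"
proof -
  define L where "L = minus_op G one_op"
  have L0: "L m i = 0" if "0 \<le> i" for m i
    unfolding L_def minus_op_def using onePlusDmD[OF G that] by simp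
  then have L: "L \<in> Dnonpos" unfolding Dnonpos_def by auto
  have "\<exists>h. \<forall>j. h j = inverse_step L h j"
    by (rule downward_recursion_fixpoint[where T=1], rule inverse_step_cong[OF L0])
  then obtain h where h: "\<And>j. h j = inverse_step L h j" by blast
  define K where "K = (\<lambda>r j. h j r)"
  have K_top: "K r j = one_op r j" if "0 \<le> j" for r j
    using fun_cong[OF h[of j], of r] comp_op_eq_0_if_nonneg[OF L0 _ that] unfolding K_def inverse_step_def
    by simp
  then have K: "K \<in> onePlusDm" unfolding onePlusDm_def by auto
  have trunc: "(\<lambda>r l. if l \<le> 0 then h l r else 0) = K"
    using K_top by (auto simp: fun_eq_iff K_def one_op_def)
  have "comp_op G K = comp_op (\<lambda>m i. one_op m i + L m i) K" unfolding L_def minus_op_def by simp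
  also have "\<dots> = (\<lambda>r j. comp_op one_op K r j + comp_op L K r j)"
    by (rule comp_op_add_left[OF one_op_Dnonpos L onePlusDm_Dnonpos[OF K]])
  also have "\<dots> = one_op"
  proof (intro ext)
    fix r j
    have "K r j = h j r" by (simp add: K_def)
    also have "\<dots> = one_op r j - comp_op L K r j"
      using fun_cong[OF h[of j], of r] unfolding inverse_step_def trunc .
    finally show "comp_op one_op K r j + comp_op L K r j = one_op r j"
      unfolding comp_op_one_left by simp
  qed
  finally show ?thesis using K by blast
qed

lemma act_comp_op_one_op:
  assumes "a \<in> Dnonpos" "b \<in> Dnonpos" "comp_op a b = one_op" "f \<in> Hsp"
  shows "act a (act b f) = f"
  using assms act_comp_op[of a b _ f] act_one_op Hsp_iff_deg_le by metis

lemma comp_op_right_inverse_unique: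
  assumes G: "G \<in> onePlusDm" and K: "K \<in> Dnonpos" "comp_op G K = one_op"
    and K': "K' \<in> Dnonpos" "comp_op G K' = one_op"
  shows "K = K'"
proof (rule dop_eq_if_act_zpow_eq)
  fix n
  have z: "zpow n \<in> Hsp" by (rule Hplus_Hsp[OF zpow_Hplus])
  have "act G (act K (zpow n)) = act G (act K' (zpow n))"
    using act_comp_op_one_op[OF onePlusDm_Dnonpos[OF G] K z]
      act_comp_op_one_op[OF onePlusDm_Dnonpos[OF G] K' z] by simp
  then show "act K (zpow n) = act K' (zpow n)"
    by (rule act_onePlusDm_inj[OF G act_Hsp[OF K(1) z] act_Hsp[OF K'(1) z]])
qed

lemma comp_op_left_inverse:
  assumes G: "G \<in> onePlusDm" and K: "K \<in> Dnonpos" "comp_op G K = one_op"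
  shows "comp_op K G = one_op"
proof (rule dop_eq_if_act_zpow_eq)
  fix n
  have G': "G \<in> Dnonpos" by (rule onePlusDm_Dnonpos[OF G])
  have v: "act G (zpow n) \<in> Hsp" by (rule act_Hsp[OF G' Hplus_Hsp[OF zpow_Hplus]])
  have "act G (act K (act G (zpow n))) = act G (zpow n)"
    by (rule act_comp_op_one_op[OF G' K v])
  then have "act K (act G (zpow n)) = zpow n"
    by (rule act_onePlusDm_inj[OF G act_Hsp[OF K(1) v] Hplus_Hsp[OF zpow_Hplus]])
  then show "act (comp_op K G) (zpow n) = act one_op (zpow n)"
    by (simp add: act_comp_op[OF K(1) G' deg_le_zpow] act_one_op)
qed

lemma inv_op:
  assumes G: "G \<in> onePlusDm"
  shows "inv_op G \<in> onePlusDm" "comp_op G (inv_op G) = one_op" "comp_op (inv_op G) G = one_op"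
proof -
  obtain K where K: "K \<in> onePlusDm" "comp_op G K = one_op" using right_inverse_exists[OF G] by blast
  have KG: "comp_op K G = one_op" by (rule comp_op_left_inverse[OF G onePlusDm_Dnonpos[OF K(1)] K(2)])
  have "inv_op G = K" unfolding inv_op_def
  proof (rule the_equality)
    show "minus_op K one_op \<in> Dminus \<and> comp_op G K = one_op \<and> comp_op K G = one_op"
      using K KG onePlusDm_iff by blast
  next
    fix K' assume "minus_op K' one_op \<in> Dminus \<and> comp_op G K' = one_op \<and> comp_op K' G = one_op"
    then show "K' = K"
      using comp_op_right_inverse_unique[OF G _ _ onePlusDm_Dnonpos[OF K(1)] K(2)]
        onePlusDm_iff onePlusDm_Dnonpos by blast
  qed
  then show "inv_op G \<in> onePlusDm" "comp_op G (inv_op G) = one_op" "comp_op (inv_op G) G = one_op"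
    using K KG by auto
qed

section \<open>The wave function\<close>

lemma wave:
  assumes W: "W \<in> Gr0"
  shows "wave W = act (satoG W) (zpow 0)" "wave W \<in> W" "wave W \<in> onePlusHm"
    "\<And>\<Psi>. \<Psi> \<in> W \<Longrightarrow> \<Psi> \<in> onePlusHm \<Longrightarrow> \<Psi> = wave W"
proof -
  define w where "w = act (satoG W) (zpow 0)"
  have wW: "w \<in> W" unfolding w_def by (rule satoG(2)[OF W])
  have wH: "w \<in> onePlusHm"
    unfolding w_def onePlusHm_def act_zpow using onePlusDmD[OF satoG(1)[OF W]] by (auto simp: one_op_def)
  have uniq: "\<Psi> = w" if "\<Psi> \<in> W" "\<Psi> \<in> onePlusHm" for \<Psi>
  proof (rule Gr0_eq_if_pplus_eq[OF W that(1) wW])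
    show "pplus \<Psi> = pplus w"
    proof
      fix n show "pplus \<Psi> n = pplus w n"
        using that(2) wH unfolding pplus_def onePlusHm_def by (cases "n = 0"; cases "0 < n") auto
    qed
  qed
  have wave: "wave W = w" unfolding wave_def
  proof (rule the_equality)
    show "w \<in> W \<and> w \<in> onePlusHm" using wW wH ..
  next
    fix \<Psi> assume "\<Psi> \<in> W \<and> \<Psi> \<in> onePlusHm"
    then show "\<Psi> = w" using uniq by simp
  qed
  then show "wave W = act (satoG W) (zpow 0)" unfolding w_def .
  show "wave W \<in> W" "wave W \<in> onePlusHm" using wW wH wave by simp_all
  show "\<Psi> = wave W" if "\<Psi> \<in> W" "\<Psi> \<in> onePlusHm" for \<Psi>
    using uniq[OF that] wave by simp
qed

lemma act_P_W:
  assumes W: "W \<in> Gr0" and f: "f \<in> Hsp"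
  shows "act (P_W W) f = act (satoG W) (act dz_op (act (inv_op (satoG W)) f))"
proof -
  have G: "satoG W \<in> Dnonpos" and K: "inv_op (satoG W) \<in> Dnonpos"
    using satoG(1)[OF W] inv_op(1)[OF satoG(1)[OF W]] onePlusDm_Dnonpos by auto
  obtain N where N: "deg_le N f" using f Hsp_iff_deg_le by blast
  show ?thesis
    unfolding P_W_def act_comp_op[OF comp_op_Dnonpos[OF G dz_op_Dnonpos] K N]
      act_comp_op[OF G dz_op_Dnonpos act_deg_le[OF K N]] ..
qed

lemma P_W_kernel:
  assumes W: "W \<in> Gr0" and \<Psi>: "\<Psi> \<in> Hsp" "act (P_W W) \<Psi> = (\<lambda>_. 0)"
  shows "\<Psi> = (\<lambda>n. act (inv_op (satoG W)) \<Psi> 0 * wave W n)"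
proof -
  define G where "G = satoG W"
  define K where "K = inv_op G"
  have G: "G \<in> onePlusDm" unfolding G_def by (rule satoG(1)[OF W])
  have G': "G \<in> Dnonpos" and K: "K \<in> Dnonpos"
    using G inv_op(1)[OF G] onePlusDm_Dnonpos unfolding K_def by auto
  define u where "u = act K \<Psi>"
  have u: "u \<in> Hsp" unfolding u_def by (rule act_Hsp[OF K \<Psi>(1)])
  have "act G (act dz_op u) = act G (\<lambda>_. 0)"
    using \<Psi>(2) unfolding act_P_W[OF W \<Psi>(1)] act_zero u_def K_def G_def .
  then have "act dz_op u = (\<lambda>_. 0)"
    by (rule act_onePlusDm_inj[OF G act_Hsp[OF dz_op_Dnonpos u] zero_Hsp])
  then have "u = (\<lambda>l. u 0 * zpow 0 l)" by (simp only: act_dz_op_eq_0_iff)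
  then have "act G u = (\<lambda>n. u 0 * wave W n)"
    using act_scale[of G "u 0" "zpow 0"] wave(1)[OF W] unfolding G_def by metis
  moreover have "act G u = \<Psi>"
    unfolding u_def by (rule act_comp_op_one_op[OF G' K inv_op(2)[OF G, folded K_def] \<Psi>(1)])
  ultimately show ?thesis unfolding u_def K_def G_def by simp
qed

lemma P_W_wave:
  assumes W: "W \<in> Gr0"
  shows "act (P_W W) (wave W) = (\<lambda>_. 0)"
proof -
  define G where "G = satoG W"
  have G: "G \<in> onePlusDm" unfolding G_def by (rule satoG(1)[OF W])
  have G': "G \<in> Dnonpos" and K: "inv_op G \<in> Dnonpos"
    using G inv_op(1)[OF G] onePlusDm_Dnonpos by auto
  have "act (inv_op G) (act G (zpow 0)) = zpow 0"
    by (rule act_comp_op_one_op[OF K G' inv_op(3)[OF G] Hplus_Hsp[OF zpow_Hplus]])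
  moreover have "act dz_op (zpow 0) = (\<lambda>_. 0)"
    unfolding act_dz_op_eq_0_iff by (simp add: zpow_def fun_eq_iff)
  ultimately show ?thesis
    using act_P_W[OF W onePlusHm_Hsp[OF wave(3)[OF W]]] unfolding wave(1)[OF W] G_def
    by (simp add: act_zero)
qed

lemma P_W_kernel_onePlusHm_iff:
  assumes W: "W \<in> Gr0"
  shows "(\<Psi> \<in> onePlusHm \<and> act (P_W W) \<Psi> = (\<lambda>_. 0)) \<longleftrightarrow> \<Psi> = wave W"
proof
  assume \<Psi>: "\<Psi> \<in> onePlusHm \<and> act (P_W W) \<Psi> = (\<lambda>_. 0)"
  then have "\<Psi> = (\<lambda>n. act (inv_op (satoG W)) \<Psi> 0 * wave W n)"
    using P_W_kernel[OF W onePlusHm_Hsp] by blast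
  then have "\<Psi> \<in> W" using Gr0D(4)[OF W wave(2)[OF W]] by metis
  with \<Psi> show "\<Psi> = wave W" using wave(4)[OF W] by blast
next
  assume "\<Psi> = wave W"
  then show "\<Psi> \<in> onePlusHm \<and> act (P_W W) \<Psi> = (\<lambda>_. 0)" using wave(3)[OF W] P_W_wave[OF W] by simp
qed

theorem mainTheorem2:
  shows "(\<forall>P\<in>Pclass.
            (\<exists>\<Psi>\<in>onePlusHm. act P \<Psi> = (\<lambda>n. 0)) \<and>
            (\<forall>\<Psi>1\<in>Hsp. \<forall>\<Psi>2\<in>Hsp. \<Psi>1 \<noteq> (\<lambda>n. 0) \<longrightarrow> act P \<Psi>1 = (\<lambda>n. 0) \<longrightarrow>
                act P \<Psi>2 = (\<lambda>n. 0) \<longrightarrow> (\<exists>c::complex. \<Psi>2 = (\<lambda>n. c * \<Psi>1 n))))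
       \<and> (\<forall>W\<in>Gr0. \<forall>\<Psi>. (\<Psi> \<in> onePlusHm \<and> act (P_W W) \<Psi> = (\<lambda>n. 0)) \<longleftrightarrow> \<Psi> = wave W)"
  using Pclass_solution_exists Pclass_kernel_proportional P_W_kernel_onePlusHm_iff by blast

end
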